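(* The Waterfilling Mechanism (with exact bucketing) described in the context satisfies Non-Interference: for every nonempty finite set $S$ of analysts, every analyst $j\notin S$ (all analysts $l$ having workload $W_l$, weight $s_l>0$ and strategy $A_l$ with $W_l=W_lA_l^+A_l$ and every column of $A_l$ of $L_1$ norm $1$), and every $i\in S$, $\mathrm{Err}_i(S\cup\{j\})\le \mathrm{Err}_i(S)$.
   Context: Data are a vector $x\in\mathbb{R}^n$. Fix $\varepsilon>0$. Each analyst $l$ has a workload matrix $W_l$, a weight $s_l>0$ (entitled to budget $s_l\varepsilon$), and a strategy matrix $A_l$ chosen for $W_l$ alone by a selection step, with $W_l = W_lA_l^+A_l$ ($^+$ the Moore–Penrose pseudo-inverse) and every column of $A_l$ of $L_1$ norm $1$. Fix a norm $\|\cdot\|$ on row vectors. Waterfilling Mechanism for a collective $S$: maintain buckets $B$ (unit vectors $e$ with weights $f_B(e)>0$), initially empty; for each $l\in S$ and each nonzero row $v$ of $s_lA_l$, set $e=v/\|v\|$; if $e\in B$ increase $f_B(e)$ by $\|v\|$, else add $e$ with $f_B(e)=\|v\|$. The joint strategy $A$ has rows $f_B(e)e$, $e\in B$. With $\varepsilon_S=(\sum_{l\in S}s_l)\varepsilon$, release $y=Ax+\eta$, $\eta$ i.i.d. Laplace of scale $\|A\|_1/\varepsilon_S$ ($\|A\|_1$ = maximum column $L_1$ norm). Analyst $i$ estimates $W_ix$ by $W_iA^+y$, with expected error $\mathrm{Err}_i(S)=\frac{2\|A\|_1^2}{\varepsilon_S^2}\|W_iA^+\|_F^2$. *)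

theory Defs
  imports Complex_Main "Jordan_Normal_Form.Matrix"
begin

definition mp_pinv :: "real mat \<Rightarrow> real mat" where
  "mp_pinv M = (THE X. X \<in> carrier_mat (dim_col M) (dim_row M)
      \<and> M * X * M = M \<and> X * M * X = X
      \<and> transpose_mat (M * X) = M * X \<and> transpose_mat (X * M) = X * M)"

definition col_L1_norm :: "real mat \<Rightarrow> real" where
  "col_L1_norm M = Max (insert 0 {(\<Sum>i<dim_row M. \<bar>M $$ (i, c)\<bar>) | c. c < dim_col M})"

definition frob_norm :: "real mat \<Rightarrow> real" where
  "frob_norm M = sqrt (\<Sum>i<dim_row M. \<Sum>c<dim_col M. (M $$ (i, c))\<^sup>2)"

definition is_row_norm :: "nat \<Rightarrow> (real vec \<Rightarrow> real) \<Rightarrow> bool" where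
  "is_row_norm n N \<longleftrightarrow>
     (\<forall>v \<in> carrier_vec n. 0 \<le> N v \<and> (N v = 0 \<longleftrightarrow> v = 0\<^sub>v n)) \<and>
     (\<forall>v \<in> carrier_vec n. \<forall>c. N (c \<cdot>\<^sub>v v) = \<bar>c\<bar> * N v) \<and>
     (\<forall>u \<in> carrier_vec n. \<forall>v \<in> carrier_vec n. N (u + v) \<le> N u + N v)"

text \<open>Buckets: a list of pairs (unit vector e, weight f_B(e)). One step processes a row v.\<close>
definition wf_step :: "nat \<Rightarrow> (real vec \<Rightarrow> real) \<Rightarrow> (real vec \<times> real) list \<Rightarrow> real vec
    \<Rightarrow> (real vec \<times> real) list" where
  "wf_step n N B v =
     (if v = 0\<^sub>v n then B
      else (let e = (1 / N v) \<cdot>\<^sub>v v in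
            if e \<in> fst ` set B
            then map (\<lambda>(e', w). if e' = e then (e', w + N v) else (e', w)) B
            else B @ [(e, N v)]))"

definition wf_buckets :: "nat \<Rightarrow> (real vec \<Rightarrow> real) \<Rightarrow> (nat \<Rightarrow> real) \<Rightarrow> (nat \<Rightarrow> real mat)
    \<Rightarrow> nat set \<Rightarrow> (real vec \<times> real) list" where
  "wf_buckets n N s A S =
     foldl (\<lambda>B l. foldl (\<lambda>B' r. wf_step n N B' (row (s l \<cdot>\<^sub>m A l) r)) B [0..<dim_row (A l)])
       [] (sorted_list_of_set S)"

definition joint_strategy :: "nat \<Rightarrow> (real vec \<Rightarrow> real) \<Rightarrow> (nat \<Rightarrow> real) \<Rightarrow> (nat \<Rightarrow> real mat)
    \<Rightarrow> nat set \<Rightarrow> real mat" where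
  "joint_strategy n N s A S = mat_of_rows n (map (\<lambda>(e, w). w \<cdot>\<^sub>v e) (wf_buckets n N s A S))"

definition wf_err :: "nat \<Rightarrow> (real vec \<Rightarrow> real) \<Rightarrow> real \<Rightarrow> (nat \<Rightarrow> real mat) \<Rightarrow> (nat \<Rightarrow> real)
    \<Rightarrow> (nat \<Rightarrow> real mat) \<Rightarrow> nat \<Rightarrow> nat set \<Rightarrow> real" where
  "wf_err n N \<epsilon> W s A i S =
     (let AS = joint_strategy n N s A S; \<epsilon>S = (\<Sum>l\<in>S. s l) * \<epsilon> in
      2 * (col_L1_norm AS)\<^sup>2 / \<epsilon>S\<^sup>2 * (frob_norm (W i * mp_pinv AS))\<^sup>2)"

end

(*
  Every column of s_l A_l has L1 norm s_l, and waterfilling only adds nonnegative multiples of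
  rows into buckets, so every column of the joint strategy A_S has L1 norm sum_{l in S} s_l.
  Hence 2 ||A_S||_1^2 / eps_S^2 = 2 / eps^2 for every collective S, and Err_i(S) is proportional
  to ||W_i A_S^+||_F^2.

  Every row of A_i points in the direction of a bucket of A_S, so W_i = X A_S with X = W_i A_S^+.
  Adding analyst j only increases bucket weights, hence A_S = D A_S' for S' = S + {j}, where D has
  at most one nonzero entry in each row and column, of absolute value at most 1; so
  ||X D||_F <= ||X||_F. Since A A^+ is an orthogonal projection, W A^+ is the solution of Y A = W
  of least Frobenius norm, and W_i = (X D) A_S' gives ||W_i A_S'^+||_F <= ||X D||_F <= ||W_i A_S^+||_F.

  The pseudo-inverse exists by a rank factorisation M = C G: with the Gram matrices G G^T and C^T C
  invertible, G^T (G G^T)^-1 (C^T C)^-1 C^T satisfies the four Penrose conditions.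
*)
theory Submission
  imports Defs "Jordan_Normal_Form.Determinant"
begin

lemma assoc_mult_mat_dim:
  "dim_col (A :: 'a :: semiring_0 mat) = dim_row B \<Longrightarrow> dim_col B = dim_row C \<Longrightarrow> A * B * C = A * (B * C)"
  by (rule assoc_mult_mat[of A "dim_row A" "dim_col A" B "dim_col B" C "dim_col C"]) auto

lemma transpose_mult_dim:
  "dim_col (A :: 'a :: comm_semiring_0 mat) = dim_row B \<Longrightarrow> transpose_mat (A * B) = transpose_mat B * transpose_mat A"
  by (rule transpose_mult[of A "dim_row A" "dim_col A" B "dim_col B"]) auto

lemma index_mult_mat_sum:
  "A \<in> carrier_mat nr n \<Longrightarrow> B \<in> carrier_mat n nc \<Longrightarrow> i < nr \<Longrightarrow> j < nc \<Longrightarrow>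
    (A * B) $$ (i, j) = (\<Sum>k<n. A $$ (i, k) * B $$ (k, j))"
  by (simp add: scalar_prod_def lessThan_atLeast0)

lemma index_mult_mat_vec_sum:
  "A \<in> carrier_mat nr n \<Longrightarrow> x \<in> carrier_vec n \<Longrightarrow> i < nr \<Longrightarrow>
    (A *\<^sub>v x) $ i = (\<Sum>k<n. A $$ (i, k) * x $ k)"
  by (simp add: scalar_prod_def lessThan_atLeast0)

lemma index_transpose_mult_vec_sum:
  "A \<in> carrier_mat nr nc \<Longrightarrow> x \<in> carrier_vec nr \<Longrightarrow> j < nc \<Longrightarrow>
    (transpose_mat A *\<^sub>v x) $ j = (\<Sum>k<nr. A $$ (k, j) * x $ k)"
  by (auto simp: scalar_prod_def lessThan_atLeast0 intro!: sum.cong)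

lemma real_scalar_prod_self_eq_0:
  fixes v :: "real vec"
  assumes "v \<in> carrier_vec n"
  shows "v \<bullet> v = 0 \<longleftrightarrow> v = 0\<^sub>v n"
  using conjugate_square_eq_0_vec[OF assms] by simp

lemma vec_first_eq_0_snoc:
  assumes y: "y \<in> carrier_vec (Suc r)" and first: "vec_first y r = 0\<^sub>v r" and last: "y $ r = 0"
  shows "y = 0\<^sub>v (Suc r)"
proof (rule eq_vecI)
  fix k assume "k < dim_vec (0\<^sub>v (Suc r) :: 'a vec)"
  then consider "k < r" | "k = r" by fastforce
  then show "y $ k = 0\<^sub>v (Suc r) $ k"
  proof cases
    case 1
    then show ?thesis using arg_cong[OF first, of "\<lambda>v. v $ k"] by (simp add: vec_first_def)
  qed (use last in simp)
qed (use y in simp)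

section \<open>Rank factorisation\<close>

definition full_column_rank :: "'a :: semiring_0 mat \<Rightarrow> bool" where
  "full_column_rank M \<longleftrightarrow>
     (\<forall>x \<in> carrier_vec (dim_col M). M *\<^sub>v x = 0\<^sub>v (dim_row M) \<longrightarrow> x = 0\<^sub>v (dim_col M))"

lemma full_column_rank_no_cols: "dim_col M = 0 \<Longrightarrow> full_column_rank M"
  unfolding full_column_rank_def by auto

definition add_row :: "'a :: zero mat \<Rightarrow> 'a vec \<Rightarrow> 'a mat" where
  "add_row M v = mat (Suc (dim_row M)) (dim_col M) (\<lambda>(i, j). if i < dim_row M then M $$ (i, j) else v $ j)"

definition pad_col :: "'a :: zero mat \<Rightarrow> 'a mat" where
  "pad_col M = mat (dim_row M) (Suc (dim_col M)) (\<lambda>(i, k). if k < dim_col M then M $$ (i, k) else 0)"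

lemma add_row_carrier: "M \<in> carrier_mat m n \<Longrightarrow> add_row M v \<in> carrier_mat (Suc m) n"
  unfolding add_row_def by simp

lemma add_row_split:
  assumes "M \<in> carrier_mat (Suc m) n"
  shows "M = add_row (mat m n (\<lambda>(i, j). M $$ (i, j))) (row M m)"
  using assms by (intro eq_matI) (auto simp: add_row_def less_Suc_eq)

lemma mult_add_row:
  fixes C G :: "'a :: comm_semiring_0 mat"
  assumes C: "C \<in> carrier_mat m r" and G: "G \<in> carrier_mat r n" and c: "c \<in> carrier_vec r"
  shows "add_row C c * G = add_row (C * G) (transpose_mat G *\<^sub>v c)"
proof (rule eq_matI)
  fix i j assume "i < dim_row (add_row (C * G) (transpose_mat G *\<^sub>v c))"
    "j < dim_col (add_row (C * G) (transpose_mat G *\<^sub>v c))"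
  then have i: "i < Suc m" and j: "j < n"
    using C G by (auto simp: add_row_def)
  have "(add_row C c * G) $$ (i, j) = (\<Sum>k<r. add_row C c $$ (i, k) * G $$ (k, j))"
    by (rule index_mult_mat_sum[OF add_row_carrier[OF C] G i j])
  also have "\<dots> = add_row (C * G) (transpose_mat G *\<^sub>v c) $$ (i, j)"
    using i j C G index_mult_mat_sum[OF C G _ j] index_transpose_mult_vec_sum[OF G c j]
    by (auto simp: add_row_def less_Suc_eq mult.commute simp del: index_mult_mat(1))
  finally show "(add_row C c * G) $$ (i, j) = add_row (C * G) (transpose_mat G *\<^sub>v c) $$ (i, j)" .
qed (use C G in \<open>auto simp: add_row_def\<close>)

lemma pad_col_mult_add_row:
  assumes C: "C \<in> carrier_mat m r" and G: "G \<in> carrier_mat r n"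
  shows "pad_col C * add_row G a = C * G"
proof (rule eq_matI)
  fix i j assume "i < dim_row (C * G)" "j < dim_col (C * G)"
  then have i: "i < m" and j: "j < n"
    using C G by auto
  have "(pad_col C * add_row G a) $$ (i, j) = (\<Sum>k<Suc r. pad_col C $$ (i, k) * add_row G a $$ (k, j))"
    using C G by (intro index_mult_mat_sum[OF _ _ i j]) (auto simp: pad_col_def add_row_def)
  also have "\<dots> = (C * G) $$ (i, j)"
    using i j C G index_mult_mat_sum[OF C G i j] by (simp add: pad_col_def add_row_def del: index_mult_mat(1))
  finally show "(pad_col C * add_row G a) $$ (i, j) = (C * G) $$ (i, j)" .
qed (use C G in \<open>auto simp: pad_col_def add_row_def\<close>)

lemma transpose_add_row_mult_unit_vec:
  fixes G :: "'a :: field mat"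
  assumes G: "G \<in> carrier_mat r n" and a: "a \<in> carrier_vec n"
  shows "transpose_mat (add_row G a) *\<^sub>v unit_vec (Suc r) r = a"
proof (rule eq_vecI)
  fix j assume "j < dim_vec a"
  then have j: "j < n"
    using a by simp
  show "(transpose_mat (add_row G a) *\<^sub>v unit_vec (Suc r) r) $ j = a $ j"
    unfolding index_transpose_mult_vec_sum[OF add_row_carrier[OF G] unit_vec_carrier j]
    using G j by (simp add: add_row_def)
qed (use G a in \<open>simp add: add_row_def\<close>)

lemma full_column_rank_add_row:
  fixes C :: "'a :: field mat"
  assumes C: "C \<in> carrier_mat m r" and rk: "full_column_rank C"
  shows "full_column_rank (add_row C c)"
  unfolding full_column_rank_def
proof (intro ballI impI)
  fix y assume y: "y \<in> carrier_vec (dim_col (add_row C c))"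
    and Cy: "add_row C c *\<^sub>v y = 0\<^sub>v (dim_row (add_row C c))"
  have y': "y \<in> carrier_vec r"
    using y C by (simp add: add_row_def)
  have "C *\<^sub>v y = 0\<^sub>v m"
  proof (rule eq_vecI)
    fix i assume "i < dim_vec (0\<^sub>v m :: 'a vec)"
    then have i: "i < m" by simp
    have "(C *\<^sub>v y) $ i = (add_row C c *\<^sub>v y) $ i"
      unfolding index_mult_mat_vec_sum[OF C y' i]
        index_mult_mat_vec_sum[OF add_row_carrier[OF C] y' less_SucI[OF i]]
      using i C by (simp add: add_row_def)
    then show "(C *\<^sub>v y) $ i = 0\<^sub>v m $ i"
      using Cy i add_row_carrier[OF C, of c] by simp
  qed (use C in simp)
  then show "y = 0\<^sub>v (dim_col (add_row C c))"
    using rk y' C unfolding full_column_rank_def by (simp add: add_row_def)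
qed

lemma full_column_rank_add_unit_row:
  fixes C :: "'a :: field mat"
  assumes C: "C \<in> carrier_mat m r" and rk: "full_column_rank C"
  shows "full_column_rank (add_row (pad_col C) (unit_vec (Suc r) r))"
  unfolding full_column_rank_def
proof (intro ballI impI)
  let ?C' = "add_row (pad_col C) (unit_vec (Suc r) r)"
  have C': "?C' \<in> carrier_mat (Suc m) (Suc r)"
    using C by (simp add: add_row_def pad_col_def)
  fix y assume y: "y \<in> carrier_vec (dim_col ?C')" and C'y: "?C' *\<^sub>v y = 0\<^sub>v (dim_row ?C')"
  have y': "y \<in> carrier_vec (Suc r)"
    using y C' by simp
  have C'y_i: "(?C' *\<^sub>v y) $ i = (\<Sum>k<r. ?C' $$ (i, k) * y $ k) + ?C' $$ (i, r) * y $ r"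
    if "i < Suc m" for i
    using index_mult_mat_vec_sum[OF C' y' that] by simp
  have yr: "y $ r = 0"
  proof -
    have "y $ r = (?C' *\<^sub>v y) $ m"
      unfolding C'y_i[OF lessI] using C by (simp add: add_row_def pad_col_def)
    then show ?thesis
      using C'y C' by simp
  qed
  have "C *\<^sub>v vec_first y r = 0\<^sub>v m"
  proof (rule eq_vecI)
    fix i assume "i < dim_vec (0\<^sub>v m :: 'a vec)"
    then have i: "i < m" by simp
    have "(C *\<^sub>v vec_first y r) $ i = (?C' *\<^sub>v y) $ i"
      unfolding index_mult_mat_vec_sum[OF C vec_first_carrier i] C'y_i[OF less_SucI[OF i]]
      using i C by (simp add: vec_first_def add_row_def pad_col_def)
    then show "(C *\<^sub>v vec_first y r) $ i = 0\<^sub>v m $ i"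
      using C'y i C' by simp
  qed (use C in simp)
  then have "vec_first y r = 0\<^sub>v r"
    using rk C unfolding full_column_rank_def by auto
  then show "y = 0\<^sub>v (dim_col ?C')"
    using vec_first_eq_0_snoc[OF y' _ yr] C' by simp
qed

lemma full_column_rank_transpose_add_row:
  fixes G :: "'a :: field mat"
  assumes G: "G \<in> carrier_mat r n" and a: "a \<in> carrier_vec n"
    and rk: "full_column_rank (transpose_mat G)"
    and new: "\<forall>c \<in> carrier_vec r. a \<noteq> transpose_mat G *\<^sub>v c"
  shows "full_column_rank (transpose_mat (add_row G a))"
  unfolding full_column_rank_def
proof (intro ballI impI)
  let ?G' = "add_row G a"
  have G': "?G' \<in> carrier_mat (Suc r) n"
    by (rule add_row_carrier[OF G])
  fix x assume x: "x \<in> carrier_vec (dim_col (transpose_mat ?G'))"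
    and G'x: "transpose_mat ?G' *\<^sub>v x = 0\<^sub>v (dim_row (transpose_mat ?G'))"
  have x': "x \<in> carrier_vec (Suc r)"
    using x G' by simp
  define x0 where "x0 = vec_first x r"
  have x0: "x0 \<in> carrier_vec r"
    unfolding x0_def by simp
  have comb: "(transpose_mat G *\<^sub>v x0) $ j + x $ r * a $ j = 0" if j: "j < n" for j
  proof -
    have "0 = (transpose_mat ?G' *\<^sub>v x) $ j"
      using G'x G' j by simp
    also have "\<dots> = (\<Sum>k<r. ?G' $$ (k, j) * x $ k) + ?G' $$ (r, j) * x $ r"
      unfolding index_transpose_mult_vec_sum[OF G' x' j] by simp
    also have "\<dots> = (transpose_mat G *\<^sub>v x0) $ j + x $ r * a $ j"
      unfolding index_transpose_mult_vec_sum[OF G x0 j] using j G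
      by (simp add: add_row_def x0_def vec_first_def)
    finally show ?thesis by simp
  qed
  have xr: "x $ r = 0"
  proof (rule ccontr)
    assume nz: "x $ r \<noteq> 0"
    have "a = transpose_mat G *\<^sub>v ((- 1 / x $ r) \<cdot>\<^sub>v x0)"
    proof (rule eq_vecI)
      fix j assume "j < dim_vec (transpose_mat G *\<^sub>v ((- 1 / x $ r) \<cdot>\<^sub>v x0))"
      then have j: "j < n" using G by simp
      show "a $ j = (transpose_mat G *\<^sub>v ((- 1 / x $ r) \<cdot>\<^sub>v x0)) $ j"
        using comb[OF j] nz G x0 j
        by (simp add: mult_mat_vec field_simps) (simp add: eq_neg_iff_add_eq_0 add.commute)
    qed (use a G in simp)
    then show False
      using new x0 by auto
  qed
  have "transpose_mat G *\<^sub>v x0 = 0\<^sub>v n"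
    using comb xr G x0 by (intro eq_vecI) auto
  then have "x0 = 0\<^sub>v r"
    using rk G x0 unfolding full_column_rank_def by auto
  then show "x = 0\<^sub>v (dim_col (transpose_mat ?G'))"
    using vec_first_eq_0_snoc[OF x' _ xr] G' unfolding x0_def by simp
qed

lemma rank_factorization:
  fixes M :: "'a :: field mat"
  assumes "M \<in> carrier_mat m n"
  shows "\<exists>r C G. C \<in> carrier_mat m r \<and> G \<in> carrier_mat r n \<and> M = C * G
    \<and> full_column_rank C \<and> full_column_rank (transpose_mat G)"
  using assms
proof (induction m arbitrary: M)
  case 0
  have "M = 0\<^sub>m 0 0 * 0\<^sub>m 0 n"
    using 0 by (intro eq_matI) auto
  then show ?case
    by (intro exI conjI) (auto intro: full_column_rank_no_cols)
next
  case (Suc m)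
  define a where "a = row M m"
  have a: "a \<in> carrier_vec n"
    using Suc.prems unfolding a_def carrier_vec_def by simp
  obtain r C G where C: "C \<in> carrier_mat m r" and G: "G \<in> carrier_mat r n"
    and M: "M = add_row (C * G) a"
    and rkC: "full_column_rank C" and rkG: "full_column_rank (transpose_mat G)"
    using Suc.IH[of "mat m n (\<lambda>(i, j). M $$ (i, j))"] add_row_split[OF Suc.prems] unfolding a_def
    by fastforce
  show ?case
  proof (cases "\<exists>c \<in> carrier_vec r. a = transpose_mat G *\<^sub>v c")
    case True
    then obtain c where c: "c \<in> carrier_vec r" and ac: "a = transpose_mat G *\<^sub>v c"
      by blast
    have "M = add_row C c * G"
      unfolding M ac by (rule mult_add_row[OF C G c, symmetric])
    then show ?thesis
      using add_row_carrier[OF C] G full_column_rank_add_row[OF C rkC] rkG by blast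
  next
    case False
    let ?C' = "add_row (pad_col C) (unit_vec (Suc r) r)" and ?G' = "add_row G a"
    have "?C' * ?G' = add_row (pad_col C * ?G') (transpose_mat ?G' *\<^sub>v unit_vec (Suc r) r)"
      using C G by (intro mult_add_row) (auto simp: pad_col_def add_row_def)
    also have "\<dots> = M"
      unfolding M pad_col_mult_add_row[OF C G] transpose_add_row_mult_unit_vec[OF G a] ..
    finally have "M = ?C' * ?G'" ..
    moreover have "?C' \<in> carrier_mat (Suc m) (Suc r)"
      using C by (simp add: add_row_def pad_col_def)
    ultimately show ?thesis
      using add_row_carrier[OF G] full_column_rank_add_unit_row[OF C rkC]
        full_column_rank_transpose_add_row[OF G a rkG] False by blast
  qed
qed

lemma full_column_rank_left_inverse:
  fixes C :: "real mat"
  assumes C: "C \<in> carrier_mat m r" and rk: "full_column_rank C"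
  shows "\<exists>L. L \<in> carrier_mat r m \<and> L * C = 1\<^sub>m r \<and> transpose_mat (C * L) = C * L"
proof -
  let ?H = "transpose_mat C * C"
  have H: "?H \<in> carrier_mat r r"
    using C by simp
  have det: "det ?H \<noteq> 0"
  proof
    assume "det ?H = 0"
    then obtain v where v: "v \<in> carrier_vec r" "v \<noteq> 0\<^sub>v r" and Hv: "?H *\<^sub>v v = 0\<^sub>v r"
      using det_0_iff_vec_prod_zero[OF H] by blast
    have Cv: "C *\<^sub>v v \<in> carrier_vec m"
      using C v by simp
    have "(C *\<^sub>v v) \<bullet> (C *\<^sub>v v) = v \<bullet> (?H *\<^sub>v v)"
      using transpose_vec_mult_scalar[of "transpose_mat C" r m "C *\<^sub>v v" v] C v by simp
    then have "C *\<^sub>v v = 0\<^sub>v m"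
      using Hv v real_scalar_prod_self_eq_0[OF Cv] by simp
    then show False
      using rk v C unfolding full_column_rank_def by auto
  qed
  define K where "K = (1 / det ?H) \<cdot>\<^sub>m adj_mat ?H"
  have K: "K \<in> carrier_mat r r"
    unfolding K_def using adj_mat(1)[OF H] by simp
  have KH: "K * ?H = 1\<^sub>m r"
    unfolding K_def using adj_mat[OF H] det
    by (subst mult_smult_assoc_mat[of _ r r _ r]) (use H in auto)
  have HK: "?H * K = 1\<^sub>m r"
    unfolding K_def using adj_mat[OF H] det
    by (subst mult_smult_distrib[of _ r r _ r]) (use H in auto)
  have Ht: "transpose_mat ?H = ?H"
    using C by (simp add: transpose_mult_dim)
  have Kt: "transpose_mat K = K"
  proof -
    have "transpose_mat K = transpose_mat K * (?H * K)"
      using HK K by simp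
    also have "\<dots> = transpose_mat K * transpose_mat ?H * K"
      using H K Ht by simp
    also have "\<dots> = transpose_mat (?H * K) * K"
      by (simp only: transpose_mult[OF H K])
    finally show ?thesis
      using HK K by simp
  qed
  show ?thesis
  proof (intro exI conjI)
    show "K * transpose_mat C \<in> carrier_mat r m"
      using K C by simp
    show "K * transpose_mat C * C = 1\<^sub>m r"
      using K C KH by (simp add: assoc_mult_mat_dim)
    show "transpose_mat (C * (K * transpose_mat C)) = C * (K * transpose_mat C)"
      using K C Kt by (simp add: transpose_mult_dim assoc_mult_mat_dim)
  qed
qed

section \<open>The Moore--Penrose pseudo-inverse\<close>

definition penrose :: "real mat \<Rightarrow> real mat \<Rightarrow> bool" where
  "penrose M X \<longleftrightarrow> X \<in> carrier_mat (dim_col M) (dim_row M)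
      \<and> M * X * M = M \<and> X * M * X = X
      \<and> transpose_mat (M * X) = M * X \<and> transpose_mat (X * M) = X * M"

lemma mult_sym_g_inverse_eq:
  fixes M X Y :: "real mat"
  assumes M: "M \<in> carrier_mat m n" and X: "X \<in> carrier_mat n m" and Y: "Y \<in> carrier_mat n m"
    and MXM: "M * X * M = M" and MYM: "M * Y * M = M"
    and MX: "transpose_mat (M * X) = M * X" and MY: "transpose_mat (M * Y) = M * Y"
  shows "M * X = M * Y"
proof -
  have MYMX: "M * Y * (M * X) = M * X"
    using assoc_mult_mat[of "M * Y" m m M n X m] M X Y MYM by (simp del: assoc_mult_mat)
  have MXMY: "M * X * (M * Y) = M * Y"
    using assoc_mult_mat[of "M * X" m m M n Y m] M X Y MXM by (simp del: assoc_mult_mat)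
  have "M * X = transpose_mat (M * Y * (M * X))"
    using MX MYMX by simp
  also have "\<dots> = M * X * (M * Y)"
    using transpose_mult[of "M * Y" m m "M * X" m] M X Y MX MY by simp
  finally show ?thesis
    using MXMY by simp
qed

lemma penrose_unique:
  assumes M: "M \<in> carrier_mat m n" and X: "penrose M X" and Y: "penrose M Y"
  shows "X = Y"
proof -
  have Xc: "X \<in> carrier_mat n m" and Yc: "Y \<in> carrier_mat n m"
    using X Y M unfolding penrose_def by auto
  note X' = X[unfolded penrose_def] and Y' = Y[unfolded penrose_def]
  have MX: "M * X = M * Y"
    by (rule mult_sym_g_inverse_eq[OF M Xc Yc]) (use X' Y' in auto)
  have tr: "transpose_mat M * transpose_mat Z * transpose_mat M = transpose_mat (M * Z * M)"
      "transpose_mat M * transpose_mat Z = transpose_mat (Z * M)"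
    if "Z \<in> carrier_mat n m" for Z
    using that M by (simp_all add: transpose_mult_dim assoc_mult_mat_dim)
  have "transpose_mat M * transpose_mat X = transpose_mat M * transpose_mat Y"
    by (rule mult_sym_g_inverse_eq[of _ n m]) (use M Xc Yc X' Y' tr[OF Xc] tr[OF Yc] in auto)
  hence XM: "X * M = Y * M"
    using tr(2)[OF Xc] tr(2)[OF Yc] by (metis transpose_transpose)
  have "X = X * (M * Y)"
    using X' MX assoc_mult_mat[OF Xc M Xc] by (simp del: assoc_mult_mat)
  also have "\<dots> = Y"
    using Y' XM assoc_mult_mat[OF Xc M Yc] by (simp del: assoc_mult_mat)
  finally show ?thesis .
qed

lemma penrose_mult:
  assumes C: "C \<in> carrier_mat m r" and G: "G \<in> carrier_mat r n"
    and L: "L \<in> carrier_mat r m" and R: "R \<in> carrier_mat n r"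
    and LC: "L * C = 1\<^sub>m r" and GR: "G * R = 1\<^sub>m r"
    and CL: "transpose_mat (C * L) = C * L" and RG: "transpose_mat (R * G) = R * G"
  shows "penrose (C * G) (R * L)"
proof -
  have LC': "L * (C * Z) = Z" and GR': "G * (R * Z) = Z" if "dim_row Z = r" for Z
    using that C G L R LC GR by (simp_all flip: assoc_mult_mat_dim)
  have MX: "C * G * (R * L) = C * L"
    by (subst assoc_mult_mat[OF C G]) (use R L GR' in auto)
  have XM: "R * L * (C * G) = R * G"
    by (subst assoc_mult_mat[OF R L]) (use C G LC' in auto)
  have "C * L * (C * G) = C * G"
    by (subst assoc_mult_mat[OF C L]) (use C G LC' in auto)
  moreover have "R * G * (R * L) = R * L"
    by (subst assoc_mult_mat[OF R G]) (use R L GR' in auto)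
  ultimately show ?thesis
    unfolding penrose_def MX XM using C G L R CL RG by simp
qed

lemma penrose_exists:
  assumes M: "M \<in> carrier_mat m n"
  shows "\<exists>X. penrose M X"
proof -
  obtain r C G where C: "C \<in> carrier_mat m r" and G: "G \<in> carrier_mat r n" and MCG: "M = C * G"
    and rkC: "full_column_rank C" and rkG: "full_column_rank (transpose_mat G)"
    using rank_factorization[OF M] by blast
  obtain L where L: "L \<in> carrier_mat r m" "L * C = 1\<^sub>m r" "transpose_mat (C * L) = C * L"
    using full_column_rank_left_inverse[OF C rkC] by blast
  obtain L' where L': "L' \<in> carrier_mat r n" "L' * transpose_mat G = 1\<^sub>m r"
      "transpose_mat (transpose_mat G * L') = transpose_mat G * L'"
    using full_column_rank_left_inverse[OF _ rkG] G by auto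
  have "penrose (C * G) (transpose_mat L' * L)"
  proof (rule penrose_mult[OF C G L(1) _ L(2)])
    show "G * transpose_mat L' = 1\<^sub>m r"
      using arg_cong[OF L'(2), of transpose_mat] G L'(1) by (simp add: transpose_mult_dim)
    show "transpose_mat (transpose_mat L' * G) = transpose_mat L' * G"
      using L'(3) G L'(1) by (simp add: transpose_mult_dim)
  qed (use L L' in auto)
  then show ?thesis
    unfolding MCG by blast
qed

lemma mp_pinv_penrose:
  assumes M: "M \<in> carrier_mat m n"
  shows "penrose M (mp_pinv M)"
proof -
  have "mp_pinv M = (THE X. penrose M X)"
    unfolding mp_pinv_def penrose_def ..
  moreover have "\<exists>!X. penrose M X"
    using penrose_exists[OF M] penrose_unique[OF M] by blast
  ultimately show ?thesis
    by (simp add: theI')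
qed

lemma mult_mp_pinv_mult:
  assumes M: "M \<in> carrier_mat m n" and C: "C \<in> carrier_mat k m"
  shows "C * M * mp_pinv M * M = C * M"
proof -
  note P = mp_pinv_penrose[OF M, unfolded penrose_def]
  have Pc: "mp_pinv M \<in> carrier_mat n m"
    using P M by simp
  have "C * M * mp_pinv M * M = C * (M * mp_pinv M) * M"
    by (simp only: assoc_mult_mat[OF C M Pc])
  also have "\<dots> = C * (M * mp_pinv M * M)"
    using C M Pc by (intro assoc_mult_mat) auto
  finally show ?thesis
    using P by simp
qed

section \<open>Frobenius norm\<close>

definition frob_sq :: "real mat \<Rightarrow> real" where
  "frob_sq M = (\<Sum>i<dim_row M. \<Sum>c<dim_col M. (M $$ (i, c))\<^sup>2)"

lemma frob_sq_nonneg: "0 \<le> frob_sq M"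
  unfolding frob_sq_def by (intro sum_nonneg) auto

lemma frob_norm_sq: "(frob_norm M)\<^sup>2 = frob_sq M"
  unfolding frob_norm_def frob_sq_def[symmetric] using frob_sq_nonneg by simp

lemma frob_sq_add_orthogonal:
  assumes A: "A \<in> carrier_mat k r" and B: "B \<in> carrier_mat k r"
    and AB: "A * transpose_mat B = 0\<^sub>m k k"
  shows "frob_sq (A + B) = frob_sq A + frob_sq B"
proof -
  have cross: "(\<Sum>c<r. A $$ (i, c) * B $$ (i, c)) = 0" if "i < k" for i
  proof -
    have "(\<Sum>c<r. A $$ (i, c) * B $$ (i, c)) = (A * transpose_mat B) $$ (i, i)"
      using index_mult_mat_sum[of A k r "transpose_mat B" k i i] A B that by simp
    then show ?thesis
      using AB that by simp
  qed
  have "frob_sq (A + B) = (\<Sum>i<k. \<Sum>c<r. (A $$ (i, c))\<^sup>2 + (B $$ (i, c))\<^sup>2 + 2 * (A $$ (i, c) * B $$ (i, c)))"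
    unfolding frob_sq_def using A B by (intro sum.cong) (auto simp: power2_sum)
  also have "\<dots> = frob_sq A + frob_sq B + 2 * (\<Sum>i<k. \<Sum>c<r. A $$ (i, c) * B $$ (i, c))"
    unfolding frob_sq_def using A B by (simp add: sum.distrib sum_distrib_left)
  finally show ?thesis
    using cross by simp
qed

lemma frob_sq_mult_proj_le:
  assumes Y: "Y \<in> carrier_mat k r" and Q: "Q \<in> carrier_mat r r"
    and Qt: "transpose_mat Q = Q" and QQ: "Q * Q = Q"
  shows "frob_sq (Y * Q) \<le> frob_sq Y"
proof -
  have YQ: "Y * Q \<in> carrier_mat k r"
    using Y Q by simp
  have Yt: "transpose_mat Y \<in> carrier_mat r k"
    using Y by simp
  have "transpose_mat (Y - Y * Q) = transpose_mat Y - Q * transpose_mat Y"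
    using Y Q Qt by (simp add: transpose_minus[OF Y YQ] transpose_mult_dim)
  then have "Y * Q * transpose_mat (Y - Y * Q) = Y * Q * transpose_mat Y - Y * Q * (Q * transpose_mat Y)"
    using YQ Yt Q by (simp add: mult_minus_distrib_mat[of _ k r] del: assoc_mult_mat)
  also have "Y * Q * (Q * transpose_mat Y) = Y * Q * transpose_mat Y"
  proof -
    have "Y * Q * Q = Y * Q"
      by (simp only: assoc_mult_mat[OF Y Q Q] QQ)
    then show ?thesis
      using assoc_mult_mat[OF YQ Q Yt] by simp
  qed
  also have "Y * Q * transpose_mat Y - Y * Q * transpose_mat Y = 0\<^sub>m k k"
    using YQ Yt by (intro eq_matI) auto
  finally have orth: "Y * Q * transpose_mat (Y - Y * Q) = 0\<^sub>m k k" .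
  have Z: "Y - Y * Q \<in> carrier_mat k r"
    using minus_carrier_mat[OF YQ] Y by simp
  have "frob_sq (Y * Q + (Y - Y * Q)) = frob_sq (Y * Q) + frob_sq (Y - Y * Q)"
    by (rule frob_sq_add_orthogonal[OF YQ Z orth])  moreover have "Y * Q + (Y - Y * Q) = Y"
    using Y YQ by (intro eq_matI) auto
  ultimately show ?thesis
    using frob_sq_nonneg[of "Y - Y * Q"] by simp
qed

lemma frob_sq_mult_mp_pinv_le:
  assumes M: "M \<in> carrier_mat m n" and X: "X \<in> carrier_mat k m"
  shows "frob_sq (X * M * mp_pinv M) \<le> frob_sq X"
proof -
  note P = mp_pinv_penrose[OF M, unfolded penrose_def]
  have Pc: "mp_pinv M \<in> carrier_mat n m"
    using P M by simp
  have "X * M * mp_pinv M = X * (M * mp_pinv M)"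
    using X M Pc by simp
  moreover have "frob_sq (X * (M * mp_pinv M)) \<le> frob_sq X"
  proof (rule frob_sq_mult_proj_le[OF X])
    have "M * mp_pinv M * (M * mp_pinv M) = M * mp_pinv M * M * mp_pinv M"
      using M Pc by (simp del: assoc_mult_mat add: assoc_mult_mat[symmetric, of "M * mp_pinv M" m m M n])
    then show "M * mp_pinv M * (M * mp_pinv M) = M * mp_pinv M"
      using P by (simp del: assoc_mult_mat)
  qed (use P M Pc in auto)
  ultimately show ?thesis
    by simp
qed

lemma power2_sum_single_nonzero:
  fixes f :: "'a \<Rightarrow> real"
  assumes F: "finite F" and single: "\<And>x y. x \<in> F \<Longrightarrow> y \<in> F \<Longrightarrow> f x \<noteq> 0 \<Longrightarrow> f y \<noteq> 0 \<Longrightarrow> x = y"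
  shows "(\<Sum>x\<in>F. f x)\<^sup>2 = (\<Sum>x\<in>F. (f x)\<^sup>2)"
proof (cases "\<exists>x0\<in>F. f x0 \<noteq> 0")
  case True
  then obtain x0 where x0: "x0 \<in> F" "f x0 \<noteq> 0"
    by blast
  have "\<forall>x \<in> F - {x0}. f x = 0"
    using single x0 by blast
  then show ?thesis
    using sum.remove[OF F x0(1), of f] sum.remove[OF F x0(1), of "\<lambda>x. (f x)\<^sup>2"] by simp
qed simp

lemma frob_sq_mult_contraction_le:
  assumes X: "X \<in> carrier_mat k r" and D: "D \<in> carrier_mat r r'"
    and col_single: "\<And>p p' q. p < r \<Longrightarrow> p' < r \<Longrightarrow> q < r' \<Longrightarrow>
      D $$ (p, q) \<noteq> 0 \<Longrightarrow> D $$ (p', q) \<noteq> 0 \<Longrightarrow> p = p'"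
    and row_bound: "\<And>p. p < r \<Longrightarrow> (\<Sum>q<r'. (D $$ (p, q))\<^sup>2) \<le> 1"
  shows "frob_sq (X * D) \<le> frob_sq X"
proof -
  have "frob_sq (X * D) = (\<Sum>a<k. \<Sum>q<r'. (\<Sum>p<r. X $$ (a, p) * D $$ (p, q))\<^sup>2)"
    unfolding frob_sq_def using X D
    by (intro sum.cong) (auto simp: index_mult_mat_sum simp del: index_mult_mat(1))
  also have "\<dots> = (\<Sum>a<k. \<Sum>q<r'. \<Sum>p<r. (X $$ (a, p))\<^sup>2 * (D $$ (p, q))\<^sup>2)"
    by (intro sum.cong refl, subst power2_sum_single_nonzero)
      (auto simp: power_mult_distrib intro: col_single)
  also have "\<dots> = (\<Sum>a<k. \<Sum>p<r. (X $$ (a, p))\<^sup>2 * (\<Sum>q<r'. (D $$ (p, q))\<^sup>2))"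
    by (simp add: sum_distrib_left sum.swap[of _ "{..<r'}"])
  also have "\<dots> \<le> (\<Sum>a<k. \<Sum>p<r. (X $$ (a, p))\<^sup>2)"
    by (intro sum_mono mult_left_le) (auto intro: row_bound)
  also have "\<dots> = frob_sq X"
    unfolding frob_sq_def using X by simp
  finally show ?thesis .
qed

section \<open>Waterfilling buckets\<close>

lemma row_norm_pos:
  assumes "is_row_norm n N" "v \<in> carrier_vec n" "v \<noteq> 0\<^sub>v n"
  shows "0 < N v"
  using assms unfolding is_row_norm_def by (metis order_le_less)

lemma row_norm_zero: "is_row_norm n N \<Longrightarrow> N (0\<^sub>v n) = 0"
  unfolding is_row_norm_def by simp

lemma row_norm_smult_dir:
  assumes "is_row_norm n N" "v \<in> carrier_vec n"
  shows "N v \<cdot>\<^sub>v ((1 / N v) \<cdot>\<^sub>v v) = v"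
proof (cases "v = 0\<^sub>v n")
  case True
  then show ?thesis by auto
next
  case False
  then show ?thesis
    using row_norm_pos[OF assms False] by (auto simp: smult_smult_assoc)
qed

lemma sum_list_concat: "sum_list (concat xss) = sum_list (map sum_list xss)"
  by (induction xss) auto

lemma sum_list_key_none:
  "e \<notin> fst ` set B \<Longrightarrow> (\<Sum>x\<leftarrow>B. if fst x = e then f x else 0) = (0 :: real)"
  by (induction B) auto

lemma sum_list_key_single:
  assumes "distinct (map fst B)" "x0 \<in> set B"
  shows "(\<Sum>x\<leftarrow>B. if fst x = fst x0 then f x else 0) = (f x0 :: real)"
  using assms
proof (induction B)
  case (Cons x B)
  show ?case
  proof (cases "x = x0")
    case True
    with Cons.prems have "fst x0 \<notin> fst ` set B"
      by simp
    with True show ?thesis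
      by (simp add: sum_list_key_none)
  next
    case False
    with Cons.prems have "fst x \<noteq> fst x0"
      by auto
    with False Cons show ?thesis
      by simp
  qed
qed simp

lemma map_fst_update_weight:
  "map fst (map (\<lambda>(e', w). if e' = e then (e', f w) else (e', w)) B) = map fst B"
  by (induction B) auto

lemma distinct_keys_wf_step:
  "distinct (map fst B) \<Longrightarrow> distinct (map fst (wf_step n N B v))"
  unfolding wf_step_def Let_def by (auto simp del: map_map simp add: map_fst_update_weight)

lemma sum_list_wf_step:
  fixes h :: "real vec \<Rightarrow> real \<Rightarrow> real"
  assumes B: "distinct (map fst B)" and h_add: "\<And>e w w'. h e (w + w') = h e w + h e w'"
  shows "(\<Sum>(e, w)\<leftarrow>wf_step n N B v. h e w)
    = (\<Sum>(e, w)\<leftarrow>B. h e w) + (if v = 0\<^sub>v n then 0 else h ((1 / N v) \<cdot>\<^sub>v v) (N v))"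
proof -
  define e0 where "e0 = (1 / N v) \<cdot>\<^sub>v v"
  consider "v = 0\<^sub>v n" | "v \<noteq> 0\<^sub>v n" "e0 \<in> fst ` set B" | "v \<noteq> 0\<^sub>v n" "e0 \<notin> fst ` set B"
    by blast
  then show ?thesis
  proof cases
    case 2
    then obtain x0 where x0: "x0 \<in> set B" "fst x0 = e0"
      by auto
    have step: "wf_step n N B v = map (\<lambda>(e', w). if e' = e0 then (e', w + N v) else (e', w)) B"
      using 2 by (simp add: wf_step_def Let_def e0_def)
    have "(\<Sum>(e, w)\<leftarrow>wf_step n N B v. h e w)
        = (\<Sum>x\<leftarrow>B. h (fst x) (snd x) + (if fst x = fst x0 then h e0 (N v) else 0))"
      unfolding step map_map
      by (intro arg_cong[where f = sum_list] map_cong) (auto simp: x0(2) h_add split_def)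
    also have "\<dots> = (\<Sum>(e, w)\<leftarrow>B. h e w) + h e0 (N v)"
      by (simp add: sum_list_addf sum_list_key_single[OF B x0(1)] split_def)
    finally show ?thesis
      using 2 e0_def by simp
  qed (auto simp: wf_step_def Let_def e0_def)
qed

definition bucket_inv :: "nat \<Rightarrow> (real vec \<times> real) list \<Rightarrow> bool" where
  "bucket_inv n B \<longleftrightarrow> distinct (map fst B) \<and> (\<forall>x \<in> set B. fst x \<in> carrier_vec n \<and> 0 < snd x)"

definition bucket_weight :: "(real vec \<times> real) list \<Rightarrow> real vec \<Rightarrow> real" where
  "bucket_weight B e = (\<Sum>(e', w)\<leftarrow>B. if e' = e then w else 0)"

definition bucket_col_sum :: "(real vec \<times> real) list \<Rightarrow> nat \<Rightarrow> real" where
  "bucket_col_sum B c = (\<Sum>(e, w)\<leftarrow>B. w * \<bar>e $ c\<bar>)"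

definition row_contrib :: "nat \<Rightarrow> (real vec \<Rightarrow> real) \<Rightarrow> real vec \<Rightarrow> real vec \<Rightarrow> real" where
  "row_contrib n N v e = (if v = 0\<^sub>v n then 0 else if (1 / N v) \<cdot>\<^sub>v v = e then N v else 0)"

definition wf_rows :: "(nat \<Rightarrow> real) \<Rightarrow> (nat \<Rightarrow> real mat) \<Rightarrow> nat set \<Rightarrow> real vec list" where
  "wf_rows s A S = concat (map (\<lambda>l. rows (s l \<cdot>\<^sub>m A l)) (sorted_list_of_set S))"

lemma bucket_inv_wf_step:
  assumes norm: "is_row_norm n N" and v: "v \<in> carrier_vec n" and B: "bucket_inv n B"
  shows "bucket_inv n (wf_step n N B v)"
proof -
  have "0 < N v" if "v \<noteq> 0\<^sub>v n"
    using row_norm_pos[OF norm v that] .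
  then show ?thesis
    using B v distinct_keys_wf_step[of B n N v] unfolding bucket_inv_def
    by (auto simp: wf_step_def Let_def split: if_splits)
qed

lemma bucket_inv_foldl_wf_step:
  "is_row_norm n N \<Longrightarrow> set vs \<subseteq> carrier_vec n \<Longrightarrow> bucket_inv n B
    \<Longrightarrow> bucket_inv n (foldl (wf_step n N) B vs)"
  by (induction vs arbitrary: B) (auto intro: bucket_inv_wf_step)

lemma sum_list_foldl_wf_step:
  fixes h :: "real vec \<Rightarrow> real \<Rightarrow> real"
  assumes "distinct (map fst B)" and "\<And>e w w'. h e (w + w') = h e w + h e w'"
  shows "(\<Sum>(e, w)\<leftarrow>foldl (wf_step n N) B vs. h e w)
    = (\<Sum>(e, w)\<leftarrow>B. h e w) + (\<Sum>v\<leftarrow>vs. if v = 0\<^sub>v n then 0 else h ((1 / N v) \<cdot>\<^sub>v v) (N v))"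
  using assms(1)
proof (induction vs arbitrary: B)
  case (Cons v vs)
  show ?case
    using Cons.IH[OF distinct_keys_wf_step[OF Cons.prems]] sum_list_wf_step[where h = h and v = v, OF Cons.prems assms(2)]
    by simp
qed simp

lemma wf_buckets_eq_foldl: "wf_buckets n N s A S = foldl (wf_step n N) [] (wf_rows s A S)"
proof -
  have "foldl (\<lambda>B l. foldl (\<lambda>B' r. wf_step n N B' (row (s l \<cdot>\<^sub>m A l) r)) B [0..<dim_row (A l)]) B ls
      = foldl (wf_step n N) B (concat (map (\<lambda>l. rows (s l \<cdot>\<^sub>m A l)) ls))"
    for B ls
    by (induction ls arbitrary: B) (simp_all add: foldl_map rows_def)
  then show ?thesis
    unfolding wf_buckets_def wf_rows_def .
qed

lemma row_smult_mat_carrier: "A \<in> carrier_mat m n \<Longrightarrow> row (a \<cdot>\<^sub>m A) r \<in> carrier_vec n"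
  using row_carrier[of "a \<cdot>\<^sub>m A" r] by simp

lemma set_wf_rows:
  assumes "\<And>l. A l \<in> carrier_mat (m l) n"
  shows "set (wf_rows s A S) \<subseteq> carrier_vec n"
proof -
  have "set (rows (s l \<cdot>\<^sub>m A l)) \<subseteq> carrier_vec n" for l
    using rows_carrier[of "s l \<cdot>\<^sub>m A l"] assms[of l] by simp
  then show ?thesis
    unfolding wf_rows_def by auto
qed

lemma sum_list_wf_rows:
  assumes "finite S"
  shows "(\<Sum>v\<leftarrow>wf_rows s A S. f v) = (\<Sum>l\<in>S. \<Sum>r<dim_row (A l). f (row (s l \<cdot>\<^sub>m A l) r))"
proof -
  have "(\<Sum>v\<leftarrow>wf_rows s A S. f v) = (\<Sum>l\<leftarrow>sorted_list_of_set S. \<Sum>v\<leftarrow>rows (s l \<cdot>\<^sub>m A l). f v)"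
    unfolding wf_rows_def map_concat sum_list_concat map_map comp_def ..
  also have "\<dots> = (\<Sum>l\<in>S. \<Sum>v\<leftarrow>rows (s l \<cdot>\<^sub>m A l). f v)"
    using assms by (simp add: sum_list_distinct_conv_sum_set)
  also have "\<dots> = (\<Sum>l\<in>S. \<Sum>r<dim_row (A l). f (row (s l \<cdot>\<^sub>m A l) r))"
    unfolding rows_def by (simp add: interv_sum_list_conv_sum_set_nat atLeast0LessThan)
  finally show ?thesis .
qed

lemma bucket_inv_wf_buckets:
  assumes "is_row_norm n N" and "\<And>l. A l \<in> carrier_mat (m l) n"
  shows "bucket_inv n (wf_buckets n N s A S)"
  unfolding wf_buckets_eq_foldl
  by (rule bucket_inv_foldl_wf_step) (use assms set_wf_rows[where A = A and s = s and S = S, OF assms(2)] in \<open>auto simp: bucket_inv_def\<close>)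

lemma bucket_weight_wf_buckets:
  assumes "finite S"
  shows "bucket_weight (wf_buckets n N s A S) e
    = (\<Sum>l\<in>S. \<Sum>r<dim_row (A l). row_contrib n N (row (s l \<cdot>\<^sub>m A l) r) e)"
  unfolding wf_buckets_eq_foldl bucket_weight_def
  by (subst sum_list_foldl_wf_step) (simp_all add: sum_list_wf_rows[OF assms] row_contrib_def cong: if_cong)

lemma row_contrib_nonneg: "is_row_norm n N \<Longrightarrow> v \<in> carrier_vec n \<Longrightarrow> 0 \<le> row_contrib n N v e"
  unfolding row_contrib_def using row_norm_pos[of n N v] by auto

lemma bucket_weight_wf_buckets_mono:
  assumes norm: "is_row_norm n N" and A_dim: "\<And>l. A l \<in> carrier_mat (m l) n"
    and S': "finite S'" and sub: "S \<subseteq> S'"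
  shows "bucket_weight (wf_buckets n N s A S) e \<le> bucket_weight (wf_buckets n N s A S') e"
  unfolding bucket_weight_wf_buckets[OF S'] bucket_weight_wf_buckets[OF finite_subset[OF sub S']]
  by (intro sum_mono2[OF S' sub] sum_nonneg row_contrib_nonneg[OF norm] row_smult_mat_carrier[OF A_dim])

lemma row_contrib_le_bucket_weight:
  assumes norm: "is_row_norm n N" and A_dim: "\<And>l. A l \<in> carrier_mat (m l) n"
    and S: "finite S" and i: "i \<in> S" and r: "r < m i"
  shows "row_contrib n N (row (s i \<cdot>\<^sub>m A i) r) e \<le> bucket_weight (wf_buckets n N s A S) e"
proof -
  have nonneg: "0 \<le> row_contrib n N (row (s l \<cdot>\<^sub>m A l) r') e" for l r'
    by (intro row_contrib_nonneg[OF norm] row_smult_mat_carrier[OF A_dim])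
  have "row_contrib n N (row (s i \<cdot>\<^sub>m A i) r) e \<le> (\<Sum>r'<dim_row (A i). row_contrib n N (row (s i \<cdot>\<^sub>m A i) r') e)"
    by (rule member_le_sum[OF _ nonneg]) (use r A_dim[of i] in auto)
  also have "\<dots> \<le> bucket_weight (wf_buckets n N s A S) e"
    unfolding bucket_weight_wf_buckets[OF S] using S i
    by (intro member_le_sum sum_nonneg nonneg) auto
  finally show ?thesis .
qed

lemma bucket_col_sum_wf_buckets:
  assumes norm: "is_row_norm n N" and A_dim: "\<And>l. A l \<in> carrier_mat (m l) n"
    and s_pos: "\<And>l. s l > 0" and cols: "\<And>l c. c < n \<Longrightarrow> (\<Sum>r<m l. \<bar>A l $$ (r, c)\<bar>) = 1"
    and S: "finite S" and c: "c < n"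
  shows "bucket_col_sum (wf_buckets n N s A S) c = (\<Sum>l\<in>S. s l)"
proof -
  have row_term: "(if v = 0\<^sub>v n then 0 else N v * \<bar>((1 / N v) \<cdot>\<^sub>v v) $ c\<bar>) = \<bar>v $ c\<bar>"
    if v: "v \<in> carrier_vec n" for v
    using row_norm_pos[OF norm v] v c by (auto simp: abs_mult)
  have analyst: "(\<Sum>r<dim_row (A l). \<bar>row (s l \<cdot>\<^sub>m A l) r $ c\<bar>) = s l" for l
  proof -
    have "(\<Sum>r<dim_row (A l). \<bar>row (s l \<cdot>\<^sub>m A l) r $ c\<bar>) = (\<Sum>r<m l. s l * \<bar>A l $$ (r, c)\<bar>)"
      using A_dim[of l] c s_pos[of l] by (intro sum.cong) (auto simp: abs_mult)
    also have "\<dots> = s l"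
      using cols[OF c, of l] by (simp flip: sum_distrib_left)
    finally show ?thesis .
  qed
  have "bucket_col_sum (wf_buckets n N s A S) c
      = (\<Sum>v\<leftarrow>wf_rows s A S. if v = 0\<^sub>v n then 0 else N v * \<bar>((1 / N v) \<cdot>\<^sub>v v) $ c\<bar>)"
    unfolding wf_buckets_eq_foldl bucket_col_sum_def
    by (subst sum_list_foldl_wf_step) (simp_all add: distrib_right)
  also have "\<dots> = (\<Sum>v\<leftarrow>wf_rows s A S. \<bar>v $ c\<bar>)"
    using set_wf_rows[where A = A and s = s and S = S, OF A_dim] by (intro arg_cong[where f = sum_list] map_cong refl row_term) auto
  also have "\<dots> = (\<Sum>l\<in>S. s l)"
    unfolding sum_list_wf_rows[OF S] analyst ..
  finally show ?thesis .
qed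

definition bucket_mat :: "nat \<Rightarrow> (real vec \<times> real) list \<Rightarrow> real mat" where
  "bucket_mat n B = mat_of_rows n (map (\<lambda>(e, w). w \<cdot>\<^sub>v e) B)"

lemma bucket_mat_carrier: "bucket_mat n B \<in> carrier_mat (length B) n"
  unfolding bucket_mat_def using mat_of_rows_carrier(1)[of n "map (\<lambda>(e, w). w \<cdot>\<^sub>v e) B"] by simp

lemma bucket_inv_nth:
  "bucket_inv n B \<Longrightarrow> p < length B \<Longrightarrow> fst (B ! p) \<in> carrier_vec n \<and> 0 < snd (B ! p)"
  unfolding bucket_inv_def using nth_mem[of p B] by blast

lemma row_bucket_mat:
  assumes "bucket_inv n B" "p < length B"
  shows "row (bucket_mat n B) p = snd (B ! p) \<cdot>\<^sub>v fst (B ! p)"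
  unfolding bucket_mat_def using assms bucket_inv_nth[OF assms]
  by (subst mat_of_rows_row) (auto simp: case_prod_beta)

lemma index_bucket_mat:
  assumes "bucket_inv n B" "p < length B" "c < n"
  shows "bucket_mat n B $$ (p, c) = snd (B ! p) * fst (B ! p) $ c"
proof -
  have "bucket_mat n B $$ (p, c) = row (bucket_mat n B) p $ c"
    using assms bucket_mat_carrier[of n B] by simp
  also have "\<dots> = (snd (B ! p) \<cdot>\<^sub>v fst (B ! p)) $ c"
    unfolding row_bucket_mat[OF assms(1,2)] ..
  also have "\<dots> = snd (B ! p) * fst (B ! p) $ c"
  proof (rule index_smult_vec(1))
    show "c < dim_vec (fst (B ! p))"
      using bucket_inv_nth[OF assms(1,2)] assms(3) by auto
  qed
  finally show ?thesis .
qed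

lemma bucket_key_eq_iff:
  assumes "bucket_inv n B" "p < length B" "q < length B"
  shows "fst (B ! p) = fst (B ! q) \<longleftrightarrow> p = q"
  using assms nth_eq_iff_index_eq[of "map fst B" p q] unfolding bucket_inv_def by simp

lemma sum_bucket_key:
  assumes "bucket_inv n B" "p0 < length B"
  shows "(\<Sum>p<length B. if fst (B ! p) = fst (B ! p0) then g p else 0) = g p0"
proof -
  have "(\<Sum>p<length B. if fst (B ! p) = fst (B ! p0) then g p else 0)
      = (\<Sum>p<length B. if p = p0 then g p else 0)"
    using bucket_key_eq_iff[OF assms(1) _ assms(2)] by (intro sum.cong) auto
  also have "\<dots> = g p0"
    using assms(2) by simp
  finally show ?thesis .
qed

lemma bucket_weight_nth:
  assumes "bucket_inv n B" "p < length B"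
  shows "bucket_weight B (fst (B ! p)) = snd (B ! p)"
  using sum_list_key_single[of B "B ! p" snd] assms
  unfolding bucket_weight_def bucket_inv_def by (simp add: split_def)

lemma bucket_weight_key:
  assumes "bucket_weight B e \<noteq> 0"
  shows "\<exists>p < length B. fst (B ! p) = e"
proof -
  have "e \<in> fst ` set B"
    using sum_list_key_none[of e B snd] assms unfolding bucket_weight_def split_def by blast
  then obtain x where x: "x \<in> set B" "fst x = e"
    by blast
  then obtain p where "p < length B" "B ! p = x"
    by (auto simp: in_set_conv_nth)
  then show ?thesis
    using x by blast
qed

lemma col_L1_norm_bucket_mat:
  assumes B: "bucket_inv n B" and n: "0 < n" and T: "\<And>c. c < n \<Longrightarrow> bucket_col_sum B c = T"
  shows "col_L1_norm (bucket_mat n B) = T"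
proof -
  have col: "(\<Sum>p<dim_row (bucket_mat n B). \<bar>bucket_mat n B $$ (p, c)\<bar>) = T" if c: "c < n" for c
  proof -
    have "(\<Sum>p<dim_row (bucket_mat n B). \<bar>bucket_mat n B $$ (p, c)\<bar>)
        = (\<Sum>p<length B. snd (B ! p) * \<bar>fst (B ! p) $ c\<bar>)"
    proof (intro sum.cong)
      fix p assume "p \<in> {..<length B}"
      then have p: "p < length B" by simp
      show "\<bar>bucket_mat n B $$ (p, c)\<bar> = snd (B ! p) * \<bar>fst (B ! p) $ c\<bar>"
        using index_bucket_mat[OF B p c] bucket_inv_nth[OF B p] by (simp add: abs_mult)
    qed (use bucket_mat_carrier[of n B] in simp)
    also have "\<dots> = bucket_col_sum B c"
      unfolding bucket_col_sum_def sum_list_sum_nth by (simp add: atLeast0LessThan split_def)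
    finally show ?thesis
      using T[OF c] by simp
  qed
  have "0 \<le> T"
    unfolding T[OF n, symmetric] bucket_col_sum_def
    using B unfolding bucket_inv_def by (intro sum_list_nonneg) auto
  moreover have "{(\<Sum>p<dim_row (bucket_mat n B). \<bar>bucket_mat n B $$ (p, c)\<bar>) | c. c < dim_col (bucket_mat n B)} = {T}"
    using col n bucket_mat_carrier[of n B] by auto
  ultimately show ?thesis
    unfolding col_L1_norm_def by simp
qed

lemma bucket_mat_factor:
  assumes B: "bucket_inv n B" and M: "M \<in> carrier_mat m n"
    and rows: "\<And>r. r < m \<Longrightarrow> row M r = t r \<cdot>\<^sub>v e r"
    and keys: "\<And>r. r < m \<Longrightarrow> t r \<noteq> 0 \<Longrightarrow> \<exists>p < length B. fst (B ! p) = e r"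
  shows "M = mat m (length B) (\<lambda>(r, p). if fst (B ! p) = e r then t r / snd (B ! p) else 0) * bucket_mat n B"
    (is "M = ?R * _")
proof (rule eq_matI)
  fix r c assume "r < dim_row (?R * bucket_mat n B)" "c < dim_col (?R * bucket_mat n B)"
  then have r: "r < m" and c: "c < n"
    using bucket_mat_carrier[of n B] by auto
  have M_rc: "M $$ (r, c) = t r * e r $ c"
  proof -
    have "M $$ (r, c) = row M r $ c"
      using M r c by simp
    moreover have "dim_vec (e r) = n"
      using arg_cong[OF rows[OF r], of dim_vec] M by simp
    ultimately show ?thesis
      using rows[OF r] c by simp
  qed
  have "(?R * bucket_mat n B) $$ (r, c)
      = (\<Sum>p<length B. (if fst (B ! p) = e r then t r / snd (B ! p) else 0) * (snd (B ! p) * fst (B ! p) $ c))"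
    using index_mult_mat_sum[of ?R m "length B" "bucket_mat n B" n r c] bucket_mat_carrier[of n B] r c
      index_bucket_mat[OF B _ c] by simp
  also have "\<dots> = t r * e r $ c"
  proof (cases "t r = 0")
    case False
    then obtain p0 where p0: "p0 < length B" "fst (B ! p0) = e r"
      using keys[OF r] by blast
    have "(\<Sum>p<length B. (if fst (B ! p) = e r then t r / snd (B ! p) else 0) * (snd (B ! p) * fst (B ! p) $ c))
        = (\<Sum>p<length B. if fst (B ! p) = fst (B ! p0) then t r / snd (B ! p) * (snd (B ! p) * fst (B ! p) $ c) else 0)"
      using p0 by (intro sum.cong) auto
    also have "\<dots> = t r / snd (B ! p0) * (snd (B ! p0) * fst (B ! p0) $ c)"
      by (rule sum_bucket_key[OF B p0(1)])
    finally show ?thesis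
      using p0 bucket_inv_nth[OF B p0(1)] by simp
  qed (simp cong: if_cong)
  finally show "M $$ (r, c) = (?R * bucket_mat n B) $$ (r, c)"
    using M_rc by simp
qed (use M bucket_mat_carrier[of n B] in auto)

text \<open>A bucket of \<open>B\<close> with weight \<open>w\<close> reappears in \<open>B'\<close> with some weight \<open>w' \<ge> w\<close>, so its
  row in \<open>bucket_mat n B\<close> is \<open>w / w'\<close> times the matching row of \<open>bucket_mat n B'\<close>.\<close>

definition bucket_transfer :: "(real vec \<times> real) list \<Rightarrow> (real vec \<times> real) list \<Rightarrow> real mat" where
  "bucket_transfer B B' = mat (length B) (length B')
     (\<lambda>(p, q). if fst (B' ! q) = fst (B ! p) then snd (B ! p) / snd (B' ! q) else 0)"

lemma bucket_key_mono:
  assumes B: "bucket_inv n B" and mono: "\<And>e. bucket_weight B e \<le> bucket_weight B' e"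
    and p: "p < length B"
  shows "\<exists>q < length B'. fst (B' ! q) = fst (B ! p)"
proof -
  have "0 < bucket_weight B (fst (B ! p))"
    using bucket_weight_nth[OF B p] bucket_inv_nth[OF B p] by simp
  then show ?thesis
    using bucket_weight_key[of B' "fst (B ! p)"] mono[of "fst (B ! p)"] by simp
qed

lemma bucket_mat_eq_transfer:
  assumes B: "bucket_inv n B" and B': "bucket_inv n B'"
    and mono: "\<And>e. bucket_weight B e \<le> bucket_weight B' e"
  shows "bucket_mat n B = bucket_transfer B B' * bucket_mat n B'"
  unfolding bucket_transfer_def
proof (rule bucket_mat_factor[OF B' bucket_mat_carrier])
  show "row (bucket_mat n B) p = snd (B ! p) \<cdot>\<^sub>v fst (B ! p)" if "p < length B" for p
    by (rule row_bucket_mat[OF B that])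
  show "\<exists>q < length B'. fst (B' ! q) = fst (B ! p)" if "p < length B" for p
    by (rule bucket_key_mono[OF B mono that])
qed

lemma frob_sq_mult_bucket_transfer_le:
  assumes B: "bucket_inv n B" and B': "bucket_inv n B'"
    and mono: "\<And>e. bucket_weight B e \<le> bucket_weight B' e"
    and X: "X \<in> carrier_mat k (length B)"
  shows "frob_sq (X * bucket_transfer B B') \<le> frob_sq X"
proof (rule frob_sq_mult_contraction_le[OF X])
  let ?D = "bucket_transfer B B'"
  show "?D \<in> carrier_mat (length B) (length B')"
    unfolding bucket_transfer_def by simp
  show "p = p'" if "p < length B" "p' < length B" "q < length B'" "?D $$ (p, q) \<noteq> 0" "?D $$ (p', q) \<noteq> 0"
    for p p' q
    using that bucket_key_eq_iff[OF B that(1,2)] unfolding bucket_transfer_def by (auto split: if_splits)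
  show "(\<Sum>q<length B'. (?D $$ (p, q))\<^sup>2) \<le> 1" if p: "p < length B" for p
  proof -
    obtain q0 where q0: "q0 < length B'" "fst (B' ! q0) = fst (B ! p)"
      using bucket_key_mono[OF B mono p] by blast
    have "(\<Sum>q<length B'. (?D $$ (p, q))\<^sup>2)
        = (\<Sum>q<length B'. if fst (B' ! q) = fst (B' ! q0) then (snd (B ! p) / snd (B' ! q))\<^sup>2 else 0)"
      unfolding bucket_transfer_def using p q0 by (intro sum.cong) auto
    also have "\<dots> = (snd (B ! p) / snd (B' ! q0))\<^sup>2"
      by (rule sum_bucket_key[OF B' q0(1)])
    also have "\<dots> \<le> 1"
    proof -
      have "snd (B ! p) \<le> snd (B' ! q0)"
        using mono[of "fst (B ! p)"] bucket_weight_nth[OF B p] bucket_weight_nth[OF B' q0(1)] q0(2)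
        by simp
      then show ?thesis
        using bucket_inv_nth[OF B p] by (simp add: power_le_one)
    qed
    finally show ?thesis .
  qed
qed

lemma joint_strategy_eq_bucket_mat: "joint_strategy n N s A S = bucket_mat n (wf_buckets n N s A S)"
  unfolding joint_strategy_def bucket_mat_def ..

lemma joint_strategy_carrier:
  "joint_strategy n N s A S \<in> carrier_mat (length (wf_buckets n N s A S)) n"
  unfolding joint_strategy_eq_bucket_mat by (rule bucket_mat_carrier)

lemma col_L1_norm_joint_strategy:
  assumes norm: "is_row_norm n N" and A_dim: "\<And>l. A l \<in> carrier_mat (m l) n"
    and s_pos: "\<And>l. s l > 0" and cols: "\<And>l c. c < n \<Longrightarrow> (\<Sum>r<m l. \<bar>A l $$ (r, c)\<bar>) = 1"
    and S: "finite S"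
  shows "col_L1_norm (joint_strategy n N s A S) = (if n = 0 then 0 else (\<Sum>l\<in>S. s l))"
proof (cases "n = 0")
  case True
  then show ?thesis
    unfolding col_L1_norm_def joint_strategy_eq_bucket_mat
    using bucket_mat_carrier[of n "wf_buckets n N s A S"] by simp
next
  case False
  then show ?thesis
    unfolding joint_strategy_eq_bucket_mat
    using col_L1_norm_bucket_mat[OF bucket_inv_wf_buckets[OF norm A_dim]]
      bucket_col_sum_wf_buckets[OF norm A_dim s_pos cols S] by simp
qed

lemma wf_err_eq:
  assumes eps: "\<epsilon> > 0" and norm: "is_row_norm n N" and A_dim: "\<And>l. A l \<in> carrier_mat (m l) n"
    and s_pos: "\<And>l. s l > 0" and cols: "\<And>l c. c < n \<Longrightarrow> (\<Sum>r<m l. \<bar>A l $$ (r, c)\<bar>) = 1"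
    and S: "finite S" "S \<noteq> {}"
  shows "wf_err n N \<epsilon> W s A i S = 2 / \<epsilon>\<^sup>2 * frob_sq (W i * mp_pinv (joint_strategy n N s A S))"
proof (cases "n = 0")
  case True
  let ?AS = "joint_strategy n N s A S"
  have "?AS \<in> carrier_mat (length (wf_buckets n N s A S)) 0"
    using True bucket_mat_carrier unfolding joint_strategy_eq_bucket_mat by simp
  then have "dim_row (mp_pinv ?AS) = 0"
    using mp_pinv_penrose unfolding penrose_def by (metis carrier_matD(2) carrier_matD(1))
  then have "frob_sq (W i * mp_pinv ?AS) = 0"
    unfolding frob_sq_def by (simp add: scalar_prod_def)
  then show ?thesis
    using True col_L1_norm_joint_strategy[OF norm A_dim s_pos cols S(1)]
    unfolding wf_err_def Let_def by simp
next
  case False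
  have "0 < (\<Sum>l\<in>S. s l)"
    using S s_pos by (simp add: sum_pos)
  moreover have "col_L1_norm (joint_strategy n N s A S) = (\<Sum>l\<in>S. s l)"
    using False col_L1_norm_joint_strategy[OF norm A_dim s_pos cols S(1)] by simp
  ultimately show ?thesis
    unfolding wf_err_def Let_def frob_norm_sq using eps by (simp add: power_mult_distrib)
qed

lemma strategy_factors_through_joint_strategy:
  assumes norm: "is_row_norm n N" and A_dim: "\<And>l. A l \<in> carrier_mat (m l) n"
    and s_pos: "\<And>l. s l > 0" and S: "finite S" and i: "i \<in> S"
  obtains R where "R \<in> carrier_mat (m i) (length (wf_buckets n N s A S))"
    "A i = R * joint_strategy n N s A S"
proof -
  let ?B = "wf_buckets n N s A S"
  define v where "v r = row (s i \<cdot>\<^sub>m A i) r" for r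
  have v: "v r \<in> carrier_vec n" for r
    unfolding v_def by (rule row_smult_mat_carrier[OF A_dim])
  define R where "R = mat (m i) (length ?B) (\<lambda>(r, p).
    if fst (?B ! p) = (1 / N (v r)) \<cdot>\<^sub>v v r then N (v r) / snd (?B ! p) else 0)"
  have R: "R \<in> carrier_mat (m i) (length ?B)"
    unfolding R_def by simp
  have sA: "s i \<cdot>\<^sub>m A i = R * bucket_mat n ?B"
    unfolding R_def
  proof (rule bucket_mat_factor[OF bucket_inv_wf_buckets[OF norm A_dim]])
    show "s i \<cdot>\<^sub>m A i \<in> carrier_mat (m i) n"
      using A_dim[of i] by simp
    show "row (s i \<cdot>\<^sub>m A i) r = N (v r) \<cdot>\<^sub>v ((1 / N (v r)) \<cdot>\<^sub>v v r)" for r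
      using row_norm_smult_dir[OF norm v, of r] unfolding v_def by (rule sym)
    show "\<exists>p < length ?B. fst (?B ! p) = (1 / N (v r)) \<cdot>\<^sub>v v r" if r: "r < m i" and nz: "N (v r) \<noteq> 0" for r
    proof (rule bucket_weight_key)
      have "v r \<noteq> 0\<^sub>v n"
        using nz row_norm_zero[OF norm] by auto
      then have "row_contrib n N (v r) ((1 / N (v r)) \<cdot>\<^sub>v v r) = N (v r)"
        unfolding row_contrib_def by simp
      moreover have "0 < N (v r)"
        using row_norm_pos[OF norm v \<open>v r \<noteq> 0\<^sub>v n\<close>] .
      ultimately have "0 < bucket_weight ?B ((1 / N (v r)) \<cdot>\<^sub>v v r)"
        using row_contrib_le_bucket_weight[where A = A and m = m and s = s, OF norm A_dim S i r,
            of "(1 / N (v r)) \<cdot>\<^sub>v v r"]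
        unfolding v_def by linarith
      then show "bucket_weight ?B ((1 / N (v r)) \<cdot>\<^sub>v v r) \<noteq> 0"
        by simp
    qed
  qed
  have "A i = (1 / s i) \<cdot>\<^sub>m (s i \<cdot>\<^sub>m A i)"
    using s_pos[of i] by (intro eq_matI) auto
  also have "\<dots> = ((1 / s i) \<cdot>\<^sub>m R) * joint_strategy n N s A S"
    unfolding sA joint_strategy_eq_bucket_mat
    by (rule mult_smult_assoc_mat[symmetric, OF R bucket_mat_carrier])
  finally show thesis
    by (rule that[rotated]) (use R in simp)
qed

lemma workload_mult_pinv_joint_strategy:
  assumes norm: "is_row_norm n N" and A_dim: "\<And>l. A l \<in> carrier_mat (m l) n"
    and s_pos: "\<And>l. s l > 0" and S: "finite S" and i: "i \<in> S"
    and W: "W \<in> carrier_mat k n" and recon: "W = W * mp_pinv (A i) * A i"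
  shows "W * mp_pinv (joint_strategy n N s A S) * joint_strategy n N s A S = W"
proof -
  let ?AS = "joint_strategy n N s A S"
  obtain R where R: "R \<in> carrier_mat (m i) (length (wf_buckets n N s A S))" and AiR: "A i = R * ?AS"
    using strategy_factors_through_joint_strategy[where A = A and m = m and s = s, OF norm A_dim s_pos S i] .
  have Pi: "mp_pinv (A i) \<in> carrier_mat n (m i)"
    using mp_pinv_penrose[OF A_dim[of i]] A_dim[of i] unfolding penrose_def by auto
  have "W * mp_pinv (A i) * R * ?AS = W * mp_pinv (A i) * (R * ?AS)"
    using W Pi R joint_strategy_carrier[of n N s A S] by (simp add: assoc_mult_mat_dim)
  also have "\<dots> = W"
    by (simp only: AiR[symmetric] recon[symmetric])
  finally have WC: "W * mp_pinv (A i) * R * ?AS = W" .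
  have "W * mp_pinv ?AS * ?AS = W * mp_pinv (A i) * R * ?AS * mp_pinv ?AS * ?AS"
    by (simp only: WC)
  also have "\<dots> = W * mp_pinv (A i) * R * ?AS"
    using W Pi R by (intro mult_mp_pinv_mult[OF joint_strategy_carrier]) auto
  finally show ?thesis
    unfolding WC .
qed

lemma joint_strategy_transfer:
  assumes norm: "is_row_norm n N" and A_dim: "\<And>l. A l \<in> carrier_mat (m l) n"
    and S': "finite S'" and sub: "S \<subseteq> S'"
  shows "joint_strategy n N s A S
      = bucket_transfer (wf_buckets n N s A S) (wf_buckets n N s A S') * joint_strategy n N s A S'"
    and "X \<in> carrier_mat k (length (wf_buckets n N s A S)) \<Longrightarrow>
      frob_sq (X * bucket_transfer (wf_buckets n N s A S) (wf_buckets n N s A S')) \<le> frob_sq X"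
proof -
  note B = bucket_inv_wf_buckets[where s = s and S = S, OF norm A_dim]
    and B' = bucket_inv_wf_buckets[where s = s and S = S', OF norm A_dim]
    and mono = bucket_weight_wf_buckets_mono[where A = A and s = s, OF norm A_dim S' sub]
  show "joint_strategy n N s A S
      = bucket_transfer (wf_buckets n N s A S) (wf_buckets n N s A S') * joint_strategy n N s A S'"
    unfolding joint_strategy_eq_bucket_mat by (rule bucket_mat_eq_transfer[OF B B' mono])
  show "frob_sq (X * bucket_transfer (wf_buckets n N s A S) (wf_buckets n N s A S')) \<le> frob_sq X"
    if "X \<in> carrier_mat k (length (wf_buckets n N s A S))"
    by (rule frob_sq_mult_bucket_transfer_le[OF B B' mono that])
qed

lemma frob_sq_workload_pinv_joint_strategy_mono:
  assumes norm: "is_row_norm n N" and A_dim: "\<And>l. A l \<in> carrier_mat (m l) n"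
    and s_pos: "\<And>l. s l > 0" and S': "finite S'" and sub: "S \<subseteq> S'" and i: "i \<in> S"
    and W: "W \<in> carrier_mat k n" and recon: "W = W * mp_pinv (A i) * A i"
  shows "frob_sq (W * mp_pinv (joint_strategy n N s A S')) \<le> frob_sq (W * mp_pinv (joint_strategy n N s A S))"
proof -
  let ?AS = "joint_strategy n N s A S" and ?AS' = "joint_strategy n N s A S'"
    and ?D = "bucket_transfer (wf_buckets n N s A S) (wf_buckets n N s A S')"
  define X where "X = W * mp_pinv ?AS"
  have X: "X \<in> carrier_mat k (length (wf_buckets n N s A S))"
    using mp_pinv_penrose[OF joint_strategy_carrier[of n N s A S]] joint_strategy_carrier[of n N s A S] W
    unfolding X_def penrose_def by auto
  have D: "?D \<in> carrier_mat (length (wf_buckets n N s A S)) (length (wf_buckets n N s A S'))"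
    unfolding bucket_transfer_def by simp
  have "W = X * ?AS"
    unfolding X_def using workload_mult_pinv_joint_strategy[where A = A and m = m and s = s, OF norm A_dim s_pos
      finite_subset[OF sub S'] i W recon] ..
  also have "\<dots> = X * ?D * ?AS'"
    unfolding joint_strategy_transfer(1)[OF norm A_dim S' sub, of s]
    using X D joint_strategy_carrier[of n N s A S'] by (simp add: assoc_mult_mat_dim)
  finally have W_eq: "W = X * ?D * ?AS'" .
  have "frob_sq (W * mp_pinv ?AS') \<le> frob_sq (X * ?D)"
    unfolding W_eq by (rule frob_sq_mult_mp_pinv_le[OF joint_strategy_carrier]) (use X D in auto)
  also have "\<dots> \<le> frob_sq X"
    by (rule joint_strategy_transfer(2)[OF norm A_dim S' sub X])
  finally show ?thesis
    unfolding X_def .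
qed

theorem mainTheorem3:
  fixes n :: nat and N :: "real vec \<Rightarrow> real" and \<epsilon> :: real
    and W A :: "nat \<Rightarrow> real mat" and s :: "nat \<Rightarrow> real"
    and k m :: "nat \<Rightarrow> nat" and S :: "nat set" and i j :: nat
  assumes eps: "\<epsilon> > 0"
    and norm: "is_row_norm n N"
    and W_dim: "\<And>l. W l \<in> carrier_mat (k l) n"
    and A_dim: "\<And>l. A l \<in> carrier_mat (m l) n"
    and s_pos: "\<And>l. s l > 0"
    and recon: "\<And>l. W l = W l * mp_pinv (A l) * A l"
    and cols: "\<And>l c. c < n \<Longrightarrow> (\<Sum>r<m l. \<bar>A l $$ (r, c)\<bar>) = 1"
    and S_fin: "finite S" and S_ne: "S \<noteq> {}"
    and j_notin: "j \<notin> S" and i_in: "i \<in> S"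
  shows "wf_err n N \<epsilon> W s A i (insert j S) \<le> wf_err n N \<epsilon> W s A i S"
proof -
  have "frob_sq (W i * mp_pinv (joint_strategy n N s A (insert j S)))
      \<le> frob_sq (W i * mp_pinv (joint_strategy n N s A S))"
    by (rule frob_sq_workload_pinv_joint_strategy_mono[OF norm A_dim s_pos finite.insertI[OF S_fin]
          subset_insertI i_in W_dim recon])
  moreover have "wf_err n N \<epsilon> W s A i S'' = 2 / \<epsilon>\<^sup>2 * frob_sq (W i * mp_pinv (joint_strategy n N s A S''))"
    if "finite S''" "S'' \<noteq> {}" for S''
    by (rule wf_err_eq[OF eps norm A_dim s_pos cols that])
  ultimately show ?thesis
    using S_fin S_ne by (simp add: divide_right_mono)
qed

end
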